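(* Let $q\ge 2$ and $n\ge 3$. If $\mathcal C\subseteq[q]^n$ is a code with insdel distance $d_I(\mathcal C)=2n-2$, then $|\mathcal C|\le \frac{q^2+q}{2}$.
   Context: $[q]=\{1,\dots,q\}$. For $\mathbf u,\mathbf v\in[q]^n$, the insdel distance $d_I(\mathbf u,\mathbf v)$ is the minimum number of insertions and deletions transforming $\mathbf u$ into $\mathbf v$; equivalently $d_I(\mathbf u,\mathbf v)=2n-2\ell_{\rm LCS}(\mathbf u,\mathbf v)$ where $\ell_{\rm LCS}$ is the length of a longest common subsequence. $d_I(\mathcal C)$ is the minimum insdel distance between distinct codewords. *)

theory Defs
  imports Complex_Main "HOL-Library.Sublist"
begin

definition words :: "nat \<Rightarrow> nat \<Rightarrow> nat list set" where
  "words q n = {u. length u = n \<and> set u \<subseteq> {1..q}}"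

definition lcs_len :: "'a list \<Rightarrow> 'a list \<Rightarrow> nat" where
  "lcs_len u v = Max {length w | w. subseq w u \<and> subseq w v}"

definition insdel_dist :: "'a list \<Rightarrow> 'a list \<Rightarrow> nat" where
  "insdel_dist u v = length u + length v - 2 * lcs_len u v"

definition code_insdel_dist :: "'a list set \<Rightarrow> nat" where
  "code_insdel_dist C = Min {insdel_dist u v | u v. u \<in> C \<and> v \<in> C \<and> u \<noteq> v}"

end

theory Submission
  imports Defs
begin

text \<open>Distinct codewords at insdel distance at least 2n - 2 share no subsequence of length 2.
  Among the first three letters of a word of length at least 3, either some letter x repeats,
  so that xx is a subsequence, or the letters a, b, c are distinct, so that ab and ac are two
  different subsequences. Counting the q^2 - q off-diagonal pairs once and the q diagonal pairs
  twice, every codeword thus occupies weight 2 out of a total of q^2 + q, disjointly.\<close>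

definition pair_tag_space :: "'a set \<Rightarrow> ('a \<times> 'a \<times> bool) set" where
  "pair_tag_space A = A \<times> A \<times> {False} \<union> (\<lambda>x. (x, x, True)) ` A"

text \<open>The boolean picks one of two tagged pairs; a diagonal pair carries the boolean as its tag,
  so that it can be counted twice.\<close>
definition pair_tag :: "'a list \<Rightarrow> bool \<Rightarrow> 'a \<times> 'a \<times> bool" where
  "pair_tag u t = (let a = u!0; b = u!1; c = u!2 in
     if a = b then (a, a, t) else if a = c then (a, a, t) else if b = c then (b, b, t)
     else if t then (a, c, False) else (a, b, False))"

lemma length_ge_3_cases:
  assumes "length u \<ge> 3"
  obtains a b c r where "u = a # b # c # r"
  using assms by (metis Suc_le_length_iff numeral_3_eq_3)

lemma subseq_pair_tag:
  assumes "length u \<ge> 3" and "pair_tag u t = (x, y, s)"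
  shows "subseq [x, y] u"
  using assms by (cases rule: length_ge_3_cases)
    (auto simp: pair_tag_def Let_def split: if_splits)

lemma pair_tag_in_pair_tag_space:
  assumes "length u \<ge> 3" and "set u \<subseteq> A"
  shows "pair_tag u t \<in> pair_tag_space A"
  using assms by (cases rule: length_ge_3_cases)
    (auto simp: pair_tag_def pair_tag_space_def Let_def)

lemma pair_tag_eq_imp_eq:
  assumes "length u \<ge> 3" and "pair_tag u t = pair_tag u t'"
  shows "t = t'"
  using assms by (cases rule: length_ge_3_cases)
    (auto simp: pair_tag_def Let_def split: if_splits)

lemma card_pair_tag_space_le:
  assumes "finite A"
  shows "card (pair_tag_space A) \<le> card A ^ 2 + card A"
proof -
  have "card (pair_tag_space A) \<le> card (A \<times> A \<times> {False}) + card ((\<lambda>x. (x, x, True)) ` A)"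
    unfolding pair_tag_space_def by (rule card_Un_le)
  also have "\<dots> \<le> card A ^ 2 + card A"
    using card_image_le[of A "\<lambda>x. (x, x, True)"]
    using assms by (auto simp: card_cartesian_product power2_eq_square)
  finally show ?thesis .
qed

lemma card_le_if_no_common_pair_subseq:
  assumes "finite A" and "\<And>u. u \<in> C \<Longrightarrow> length u \<ge> 3 \<and> set u \<subseteq> A"
    and "\<And>u v x y. u \<in> C \<Longrightarrow> v \<in> C \<Longrightarrow> subseq [x, y] u \<Longrightarrow> subseq [x, y] v \<Longrightarrow> u = v"
  shows "2 * card C \<le> card A ^ 2 + card A"
proof -
  let ?f = "\<lambda>(u, t). pair_tag u t"
  have inj: "inj_on ?f (C \<times> UNIV)"
  proof (rule inj_onI, clarify)
    fix u t v t'
    assume u: "u \<in> C" and v: "v \<in> C" and eq: "pair_tag u t = pair_tag v t'"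
    obtain x y s where tag: "pair_tag u t = (x, y, s)" by (cases "pair_tag u t")
    have "subseq [x, y] u" using subseq_pair_tag tag u assms(2) by metis
    moreover have "subseq [x, y] v" using subseq_pair_tag tag eq v assms(2) by metis
    ultimately have "u = v" using assms(3) u v by blast
    with eq show "u = v \<and> t = t'" using pair_tag_eq_imp_eq u assms(2) by blast
  qed
  have "?f ` (C \<times> UNIV) \<subseteq> pair_tag_space A"
    using pair_tag_in_pair_tag_space assms(2) by fastforce
  moreover have "finite (pair_tag_space A)"
    using assms(1) by (simp add: pair_tag_space_def)
  ultimately have "card (C \<times> (UNIV :: bool set)) \<le> card (pair_tag_space A)"
    using card_inj_on_le[OF inj] by blast
  then show ?thesis
    using card_pair_tag_space_le[OF assms(1)] by (simp add: card_cartesian_product)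
qed

lemma finite_words: "finite (words q n)"
  unfolding words_def using finite_lists_length_eq[of "{1..q}" n]
  by (simp add: conj_commute)

lemma length_le_lcs_len:
  assumes "subseq w u" and "subseq w v"
  shows "length w \<le> lcs_len u v"
proof -
  have "{length w | w. subseq w u \<and> subseq w v} \<subseteq> {0..length u}"
    by (auto dest: list_emb_length)
  then have "finite {length w | w. subseq w u \<and> subseq w v}"
    using finite_subset by blast
  with assms show ?thesis
    unfolding lcs_len_def by (intro Max_ge) auto
qed

lemma code_insdel_dist_le:
  assumes "finite C" and "u \<in> C" and "v \<in> C" and "u \<noteq> v"
  shows "code_insdel_dist C \<le> insdel_dist u v"
proof -
  have "{insdel_dist u v | u v. u \<in> C \<and> v \<in> C \<and> u \<noteq> v}
        \<subseteq> (\<lambda>(u, v). insdel_dist u v) ` (C \<times> C)"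
    by auto
  then have "finite {insdel_dist u v | u v. u \<in> C \<and> v \<in> C \<and> u \<noteq> v}"
    using assms(1) finite_subset by blast
  with assms(2-4) show ?thesis
    unfolding code_insdel_dist_def by (intro Min_le) auto
qed

theorem lemma3p4:
  fixes q n :: nat and C :: "nat list set"
  assumes "q \<ge> 2" and "n \<ge> 3"
    and "C \<subseteq> words q n"
    and "code_insdel_dist C = 2 * n - 2"
  shows "real (card C) \<le> (real q ^ 2 + real q) / 2"
proof -
  have fin: "finite C" using finite_words assms(3) finite_subset by blast
  have word: "length u = n \<and> set u \<subseteq> {1..q}" if "u \<in> C" for u
    using that assms(3) by (auto simp: words_def)
  have "u = v" if "u \<in> C" "v \<in> C" "subseq [x, y] u" "subseq [x, y] v" for u v x y
  proof (rule ccontr)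
    assume "u \<noteq> v"
    then have "2 * n - 2 \<le> length u + length v - 2 * lcs_len u v"
      using code_insdel_dist_le[OF fin that(1,2)] assms(4) by (simp add: insdel_dist_def)
    moreover have "2 \<le> lcs_len u v" using length_le_lcs_len[OF that(3,4)] by simp
    ultimately show False using word that(1,2) assms(2) by simp
  qed
  then have "2 * card C \<le> card {1..q} ^ 2 + card {1..q}"
    using word assms(2) by (intro card_le_if_no_common_pair_subseq) auto
  then have "real (2 * card C) \<le> real (q ^ 2 + q)" by (simp only: card_atLeastAtMost of_nat_le_iff) simp
  then show ?thesis by simp
qed

end
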